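(* Let $d\ge 2$. For every unimodular lattice $\mathcal L\subset\mathbb R^d$, every $\vec\alpha\in\mathbb R^d$ and every $N\in\mathbb N$, $$g_N(\vec\alpha,\mathcal L)\le \begin{cases}5 & \text{if } d=2,\\ \sigma_d+1 & \text{if } d\ge 3,\end{cases}$$ where $\sigma_d$ is the kissing number of $\mathbb R^d$.
   Context: A unimodular lattice $\mathcal L\subset\mathbb R^d$ is a lattice of covolume $1$. For $\vec\alpha\in\mathbb R^d$ and $1\le n\le N$, the Kronecker points are $\xi_n=n\vec\alpha+\mathcal L\in\mathbb R^d/\mathcal L$. The nearest neighbour distance of $\xi_n$ is $\delta_{n,N}=\min\{|(m-n)\vec\alpha+\vec\ell|>0 : 1\le m\le N,\ \vec\ell\in\mathcal L\}$, where $|\cdot|$ is the Euclidean norm, and $g_N(\vec\alpha,\mathcal L)=|\{\delta_{n,N}:1\le n\le N\}|$ is the number of distinct nearest neighbour distances. The kissing number $\sigma_d$ is the maximal number of non-overlapping unit balls in $\mathbb R^d$ that can all touch a fixed unit ball. *)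

theory Defs
  imports "HOL-Analysis.Analysis"
begin

definition unimodular_lattice :: "(real ^ 'n) set \<Rightarrow> bool" where
  "unimodular_lattice L \<longleftrightarrow>
     (\<exists>B :: real ^ 'n ^ 'n. invertible B \<and> \<bar>det B\<bar> = 1 \<and>
        L = {B *v v | v :: real ^ 'n. \<forall>i. v $ i \<in> \<int>})"

text \<open>Nearest neighbour distance of the Kronecker point n alpha + L among the first N points.\<close>
definition nn_dist :: "real ^ 'n \<Rightarrow> (real ^ 'n) set \<Rightarrow> nat \<Rightarrow> nat \<Rightarrow> real" where
  "nn_dist \<alpha> L N n =
     Inf {r. \<exists>m l. 1 \<le> m \<and> m \<le> N \<and> l \<in> L \<and>
                r = norm ((real m - real n) *\<^sub>R \<alpha> + l) \<and> r > 0}"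

definition g_N :: "nat \<Rightarrow> real ^ 'n \<Rightarrow> (real ^ 'n) set \<Rightarrow> nat" where
  "g_N N \<alpha> L = card ((\<lambda>n. nn_dist \<alpha> L N n) ` {1..N})"

text \<open>Kissing number: maximal number of non-overlapping unit balls touching a fixed
  unit ball (centred at 0); the centres of the touching balls lie at distance 2 from 0
  and pairwise at distance at least 2 (disjoint interiors).\<close>
definition kissing_number :: "'n::finite itself \<Rightarrow> nat" where
  "kissing_number _ = Max {card S | S :: (real ^ 'n) set. finite S \<and>
       (\<forall>x\<in>S. norm x = 2) \<and> (\<forall>x\<in>S. \<forall>y\<in>S. x \<noteq> y \<longrightarrow> dist x y \<ge> 2)}"

end

theory Submission
  imports Defs
begin

text \<open>
  The nearest neighbour distance of the n-th point is the running minimum, over all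
  |k| \<le> T with T = max (n - 1) (N - n), of the length of the shortest nonzero vector in
  the coset k \<alpha> + L. Since T ranges over [N div 2, N - 1], at most one distance is present at
  T = N div 2 and every further one appears at a time t in (N div 2, N - 1] where the running
  minimum drops. Pick a shortest vector v_t of t \<alpha> + L at each drop time: their lengths
  decrease with t, and any two drop times differ by at most N div 2, so v_t - v_s lies in a
  coset whose shortest vector is longer than both v_t and v_s. Hence the v_t are pairwise more
  than 60 degrees apart, and projecting them to the sphere of radius 2 gives a kissing
  configuration. In the plane, the vectors v_a + v_b - v_c give one more constraint: after a
  similarity mapping the last vector v_c to 1, no two of the other points lie on opposite sides
  of the positive real axis at angular distance less than pi, which leaves room for at most
  three of them.
\<close>

section \<open>Kissing configurations\<close>

lemma inner_lt_half_if_norm_diff_gt: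
  fixes x y :: "'a::real_inner"
  assumes "max (norm x) (norm y) < norm (x - y)"
  shows "2 * (x \<bullet> y) < norm x * norm y"
proof -
  have "(max (norm x) (norm y))\<^sup>2 < (norm (x - y))\<^sup>2"
    using assms by (intro power_strict_mono) (auto simp: le_max_iff_disj)
  also have "\<dots> = (norm x)\<^sup>2 + (norm y)\<^sup>2 - 2 * (x \<bullet> y)"
    by (simp add: power2_norm_eq_inner inner_diff_left inner_diff_right inner_commute)
  finally have "2 * (x \<bullet> y) < (min (norm x) (norm y))\<^sup>2"
    by (simp add: max_def min_def split: if_splits)
  also have "\<dots> \<le> norm x * norm y"
    by (simp add: min_def power2_eq_square mult_left_mono mult_right_mono)
  finally show ?thesis .
qed

lemma dist_rescaled_gt_2:
  fixes x y :: "'a::real_inner"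
  assumes "x \<noteq> 0" "y \<noteq> 0" "max (norm x) (norm y) < norm (x - y)"
  shows "2 < dist ((2 / norm x) *\<^sub>R x) ((2 / norm y) *\<^sub>R y)"
proof -
  have pos: "0 < norm x * norm y"
    using assms by simp
  have "(dist ((2 / norm x) *\<^sub>R x) ((2 / norm y) *\<^sub>R y))\<^sup>2 = 8 - 8 * (x \<bullet> y) / (norm x * norm y)"
    using assms(1,2)
    by (simp add: dist_norm power2_norm_eq_inner inner_diff_left inner_diff_right inner_commute
        field_simps) (simp add: power2_eq_square dot_square_norm)
  also have "\<dots> > 2\<^sup>2"
    using inner_lt_half_if_norm_diff_gt[OF assms(3)] pos by (simp add: field_simps)
  finally show ?thesis
    by (rule power_less_imp_less_base) simp
qed

definition norm_separated :: "'a::real_normed_vector set \<Rightarrow> bool" where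
  "norm_separated V \<longleftrightarrow> (\<forall>x\<in>V. \<forall>y\<in>V. x \<noteq> y \<longrightarrow> max (norm x) (norm y) < norm (x - y))"

text \<open>The kissing number is defined as a Max, which is only meaningful for a finite set.\<close>

lemma kissing_configurations_bounded:
  "\<exists>K. \<forall>S :: (real^'n) set. finite S \<and> (\<forall>x\<in>S. norm x = 2) \<and>
      (\<forall>x\<in>S. \<forall>y\<in>S. x \<noteq> y \<longrightarrow> dist x y \<ge> 2) \<longrightarrow> card S \<le> K"
proof -
  have cover: "sphere (0::real^'n) 2 \<subseteq> (\<Union>c\<in>sphere 0 2. ball c 1)"
    by force
  obtain C where C: "C \<subseteq> sphere 0 2" "finite C" "sphere (0::real^'n) 2 \<subseteq> (\<Union>c\<in>C. ball c 1)"
    using compactE_image[OF compact_sphere _ cover] by blast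
  show ?thesis
  proof (intro exI[of _ "card C"] allI impI)
    fix S :: "(real^'n) set"
    assume "finite S \<and> (\<forall>x\<in>S. norm x = 2) \<and> (\<forall>x\<in>S. \<forall>y\<in>S. x \<noteq> y \<longrightarrow> dist x y \<ge> 2)"
    then have sphere: "S \<subseteq> sphere 0 2" and far: "\<And>x y. x \<in> S \<Longrightarrow> y \<in> S \<Longrightarrow> x \<noteq> y \<Longrightarrow> 2 \<le> dist x y"
      by auto
    have "\<forall>s\<in>S. \<exists>c. c \<in> C \<and> s \<in> ball c 1"
      using sphere C(3) by blast
    then obtain f where f: "\<And>s. s \<in> S \<Longrightarrow> f s \<in> C \<and> s \<in> ball (f s) 1"
      using bchoice by metis
    have "inj_on f S"
    proof (rule inj_onI, rule ccontr)
      fix s t assume st: "s \<in> S" "t \<in> S" "f s = f t" "s \<noteq> t"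
      have "dist s t \<le> dist s (f s) + dist (f s) t"
        by (rule dist_triangle)
      also have "\<dots> < 2"
        using f[OF st(1)] f[OF st(2)] st(3) by (simp add: dist_commute)
      finally show False
        using far[OF st(1,2,4)] by simp
    qed
    moreover have "f ` S \<subseteq> C"
      using f by auto
    ultimately show "card S \<le> card C"
      using C(2) by (intro card_inj_on_le) auto
  qed
qed

lemma card_le_kissing_number:
  fixes S :: "(real^'n) set"
  assumes "finite S" "\<forall>x\<in>S. norm x = 2" "\<forall>x\<in>S. \<forall>y\<in>S. x \<noteq> y \<longrightarrow> dist x y \<ge> 2"
  shows "card S \<le> kissing_number TYPE('n)"
proof -
  obtain K where K: "\<forall>S :: (real^'n) set. finite S \<and> (\<forall>x\<in>S. norm x = 2) \<and>
      (\<forall>x\<in>S. \<forall>y\<in>S. x \<noteq> y \<longrightarrow> dist x y \<ge> 2) \<longrightarrow> card S \<le> K"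
    using kissing_configurations_bounded by blast
  have "finite {card S | S :: (real^'n) set. finite S \<and>
      (\<forall>x\<in>S. norm x = 2) \<and> (\<forall>x\<in>S. \<forall>y\<in>S. x \<noteq> y \<longrightarrow> dist x y \<ge> 2)}"
    by (rule finite_subset[of _ "{..K}"]) (use K in auto)
  then show ?thesis
    unfolding kissing_number_def using assms by (intro Max_ge) auto
qed

lemma card_norm_separated_le_kissing_number:
  fixes V :: "(real^'n) set"
  assumes "finite V" "0 \<notin> V" "norm_separated V"
  shows "card V \<le> kissing_number TYPE('n)"
proof -
  define f where "f x = (2 / norm x) *\<^sub>R x" for x :: "real^'n"
  have far: "2 < dist (f x) (f y)" if "x \<in> V" "y \<in> V" "x \<noteq> y" for x y
    unfolding f_def using assms that by (intro dist_rescaled_gt_2) (auto simp: norm_separated_def)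
  then have "inj_on f V"
    by (intro inj_onI) (metis dist_self not_less_iff_gr_or_eq zero_less_numeral)
  moreover have "card (f ` V) \<le> kissing_number TYPE('n)"
  proof (rule card_le_kissing_number)
    show "finite (f ` V)"
      using assms(1) by simp
    show "\<forall>x\<in>f ` V. norm x = 2"
      using assms(2) unfolding f_def by auto
    show "\<forall>x\<in>f ` V. \<forall>y\<in>f ` V. x \<noteq> y \<longrightarrow> dist x y \<ge> 2"
      using far by (auto intro: less_imp_le)
  qed
  ultimately show ?thesis
    by (simp add: card_image)
qed

section \<open>Planar configurations\<close>

lemma one_plus_cos_add_lt:
  fixes a b :: real
  assumes "0 < a" "0 < b" "a + b < pi"
  shows "1 + cos (a + b) < cos a + cos b"
proof -
  have "1 + cos (a + b) = 2 * (cos ((a + b) / 2))\<^sup>2"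
    using cos_double_cos[of "(a + b) / 2", unfolded mult_2 field_sum_of_halves] by simp
  moreover have "cos a + cos b = 2 * cos ((a + b) / 2) * cos ((a - b) / 2)"
    by (rule cos_plus_cos)
  ultimately have "1 + cos (a + b) - (cos a + cos b)
      = 2 * cos ((a + b) / 2) * (cos ((a + b) / 2) - cos ((a - b) / 2))"
    by (simp add: power2_eq_square algebra_simps)
  also have "cos ((a + b) / 2) - cos ((a - b) / 2) = - 2 * sin (a / 2) * sin (b / 2)"
    using cos_add[of "a / 2" "b / 2"] cos_diff[of "a / 2" "b / 2"]
    by (simp add: add_divide_distrib diff_divide_distrib)
  finally have "1 + cos (a + b) - (cos a + cos b) = - 4 * (sin (a / 2) * sin (b / 2) * cos ((a + b) / 2))"
    by simp
  moreover have "0 < sin (a / 2) * sin (b / 2) * cos ((a + b) / 2)"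
    using assms by (intro mult_pos_pos sin_gt_zero cos_gt_zero_pi) auto
  ultimately show ?thesis
    by linarith
qed

lemma cos_sin_sum_sq_lt:
  fixes p q a b :: real
  assumes "1 < q" "q \<le> p" "0 < a" "0 < b" "2 * pi / 3 < a + b" "a + b < pi"
  shows "(p * cos a + q * cos b - 1)\<^sup>2 + (p * sin a - q * sin b)\<^sup>2 < p\<^sup>2"
proof -
  define \<theta> where "\<theta> = a + b"
  have cos_\<theta>: "cos \<theta> < - 1 / 2"
    using cos_monotone_0_pi[of "2 * pi / 3" \<theta>] assms cos_120 unfolding \<theta>_def by simp
  have "0 < sin \<theta>" "0 < sin b"
    using assms unfolding \<theta>_def by (auto intro: sin_gt_zero)
  have "(p * cos a + q * cos b - 1)\<^sup>2 + (p * sin a - q * sin b)\<^sup>2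
      = p\<^sup>2 * ((sin a)\<^sup>2 + (cos a)\<^sup>2) + q\<^sup>2 * ((sin b)\<^sup>2 + (cos b)\<^sup>2) + 1
        + 2 * p * q * (cos a * cos b - sin a * sin b) - 2 * p * cos a - 2 * q * cos b"
    by algebra
  also have "\<dots> = p\<^sup>2 + q\<^sup>2 + 1 + 2 * p * q * cos \<theta> - 2 * p * cos a - 2 * q * cos b"
    unfolding \<theta>_def cos_add by (simp only: sin_cos_squared_add mult_1_right)
  also have "\<dots> = p\<^sup>2 + (q * q * (1 + 2 * cos \<theta>) + 1 - 2 * q * cos a - 2 * q * cos b)
        + 2 * (p - q) * (q * cos \<theta> - cos a)"
    by (simp add: power2_eq_square algebra_simps)
  finally have expand: "(p * cos a + q * cos b - 1)\<^sup>2 + (p * sin a - q * sin b)\<^sup>2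
      = p\<^sup>2 + (q * q * (1 + 2 * cos \<theta>) + 1 - 2 * q * cos a - 2 * q * cos b)
        + 2 * (p - q) * (q * cos \<theta> - cos a)" .
  \<comment> \<open>The expression is decreasing in p, so it suffices to treat p = q.\<close>
  have "q * cos \<theta> - cos a = cos \<theta> * (q - cos b) - sin \<theta> * sin b"
    using cos_diff[of \<theta> b] unfolding \<theta>_def by (simp add: algebra_simps)
  also have "\<dots> < 0"
  proof -
    have "cos b < q"
      using cos_le_one[of b] \<open>1 < q\<close> by linarith
    then have "cos \<theta> * (q - cos b) < 0"
      using cos_\<theta> by (intro mult_neg_pos) auto
    moreover have "0 < sin \<theta> * sin b"
      using \<open>0 < sin \<theta>\<close> \<open>0 < sin b\<close> by simp
    ultimately show ?thesis
      by linarith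
  qed
  finally have "2 * (p - q) * (q * cos \<theta> - cos a) \<le> 0"
    using \<open>q \<le> p\<close> by (simp add: mult_nonneg_nonpos)
  moreover have "q * q * (1 + 2 * cos \<theta>) \<le> q * (1 + 2 * cos \<theta>)"
    using cos_\<theta> \<open>1 < q\<close> by (intro mult_right_mono_neg) auto
  moreover have "q * (1 + cos \<theta> - (cos a + cos b)) < 0"
    using one_plus_cos_add_lt[of a b] assms unfolding \<theta>_def by (intro mult_pos_neg) auto
  ultimately show ?thesis
    using expand \<open>1 < q\<close> by (simp add: algebra_simps)
qed

lemma cmod_rcis_add_rcis_minus_one_lt:
  assumes "1 < p" "1 < q" "0 < a" "0 < b" "2 * pi / 3 < a + b" "a + b < pi"
  shows "cmod (rcis p a + rcis q (- b) - 1) < max p q"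
proof -
  have "(cmod (rcis p a + rcis q (- b) - 1))\<^sup>2
      = (p * cos a + q * cos b - 1)\<^sup>2 + (p * sin a - q * sin b)\<^sup>2"
    by (simp add: cmod_power2)
  also have "\<dots> < (max p q)\<^sup>2"
  proof (cases "q \<le> p")
    case True
    then show ?thesis
      using cos_sin_sum_sq_lt[of q p a b] assms by (simp add: max_def)
  next
    case False
    then have "(q * cos b + p * cos a - 1)\<^sup>2 + (q * sin b - p * sin a)\<^sup>2 < q\<^sup>2"
      using cos_sin_sum_sq_lt[of p q b a] assms by (simp add: add.commute)
    with False show ?thesis
      by (simp add: max_def add.commute power2_commute)
  qed
  finally show ?thesis
    by (rule power_less_imp_less_base) (use assms(1) in \<open>simp add: le_max_iff_disj\<close>)
qed

lemma inner_complex_eq_cos_Arg_diff: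
  "z \<bullet> w = cmod z * cmod w * cos (Arg z - Arg w)"
proof -
  have "z \<bullet> w = rcis (cmod z) (Arg z) \<bullet> rcis (cmod w) (Arg w)"
    by (simp only: rcis_cmod_Arg)
  then show ?thesis
    by (simp add: inner_complex_def cos_diff algebra_simps)
qed

lemma abs_bounds_if_cos_lt_half:
  fixes d :: real
  assumes "\<bar>d\<bar> < 2 * pi" "cos d < 1 / 2"
  shows "pi / 3 < \<bar>d\<bar> \<and> \<bar>d\<bar> < 5 * pi / 3"
proof (rule ccontr)
  assume "\<not> ?thesis"
  then consider "\<bar>d\<bar> \<le> pi / 3" | "5 * pi / 3 \<le> \<bar>d\<bar>"
    by linarith
  then have "cos (pi / 3) \<le> cos d"
  proof cases
    case 1
    then show ?thesis
      using cos_monotone_0_pi_le[of "\<bar>d\<bar>" "pi / 3"] by simp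
  next
    case 2
    then have "cos (pi / 3) \<le> cos (2 * pi - \<bar>d\<bar>)"
      using assms(1) by (intro cos_monotone_0_pi_le) auto
    then show ?thesis
      by simp
  qed
  with assms(2) show False
    by (simp add: cos_60)
qed

lemma Arg_diff_bounds:
  assumes "z \<noteq> 0" "w \<noteq> 0" "max (cmod z) (cmod w) < cmod (z - w)"
  shows "pi / 3 < \<bar>Arg z - Arg w\<bar> \<and> \<bar>Arg z - Arg w\<bar> < 5 * pi / 3"
proof (rule abs_bounds_if_cos_lt_half)
  show "\<bar>Arg z - Arg w\<bar> < 2 * pi"
    using Arg_bounded[of z] Arg_bounded[of w] by linarith
  have "cmod z * cmod w * (2 * cos (Arg z - Arg w)) < cmod z * cmod w * 1"
    using inner_lt_half_if_norm_diff_gt[OF assms(3)] by (simp add: inner_complex_eq_cos_Arg_diff)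
  then show "cos (Arg z - Arg w) < 1 / 2"
    using assms(1,2) by (simp add: mult_less_cancel_left_pos)
qed

lemma Arg_abs_gt_pi_third:
  assumes "1 < cmod z" "cmod z < cmod (z - 1)"
  shows "pi / 3 < \<bar>Arg z\<bar>"
proof -
  have "z \<noteq> 0"
    using assms(1) by auto
  then show ?thesis
    using Arg_diff_bounds[of z 1] assms by (simp add: max_def)
qed

lemma Arg_gap_ge_pi:
  assumes "1 < cmod z" "1 < cmod w" "pi / 3 < Arg z" "Arg w < - (pi / 3)"
    and "max (cmod z) (cmod w) < cmod (z + w - 1)"
  shows "pi \<le> Arg z - Arg w"
proof (rule ccontr)
  assume "\<not> pi \<le> Arg z - Arg w"
  then have "cmod (rcis (cmod z) (Arg z) + rcis (cmod w) (- (- Arg w)) - 1) < max (cmod z) (cmod w)"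
    using assms by (intro cmod_rcis_add_rcis_minus_one_lt) auto
  with assms(5) show False
    by (simp add: rcis_cmod_Arg less_max_iff_disj)
qed

lemma card_separated_in_interval_le_2:
  fixes S :: "real set"
  assumes "S \<subseteq> {a..b}" "b - a \<le> 2 * d" "\<And>x y. x \<in> S \<Longrightarrow> y \<in> S \<Longrightarrow> x \<noteq> y \<Longrightarrow> d < \<bar>x - y\<bar>"
  shows "card S \<le> 2"
proof (rule ccontr)
  assume "\<not> card S \<le> 2"
  then obtain T where "T \<subseteq> S" "card T = 3"
    using obtain_subset_with_card_n[of 3 S] by auto
  then obtain x y z where "{x, y, z} \<subseteq> S" "x \<noteq> y" "y \<noteq> z" "x \<noteq> z"
    unfolding card_3_iff by auto
  then have "d < \<bar>x - y\<bar>" "d < \<bar>y - z\<bar>" "d < \<bar>x - z\<bar>" "x \<in> {a..b}" "y \<in> {a..b}" "z \<in> {a..b}"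
    using assms(1,3) by auto
  with assms(2) show False
    by auto
qed

lemma card_angle_configuration_le_3:
  fixes A :: "real set"
  assumes "finite A" "A \<subseteq> {-pi..pi}"
    and far_from_0: "\<And>x. x \<in> A \<Longrightarrow> pi / 3 < \<bar>x\<bar>"
    and sep: "\<And>x y. x \<in> A \<Longrightarrow> y \<in> A \<Longrightarrow> x \<noteq> y \<Longrightarrow> pi / 3 < \<bar>x - y\<bar> \<and> \<bar>x - y\<bar> < 5 * pi / 3"
    and gap: "\<And>x y. x \<in> A \<Longrightarrow> y \<in> A \<Longrightarrow> 0 < x \<Longrightarrow> y \<le> 0 \<Longrightarrow> pi \<le> x - y"
  shows "card A \<le> 3"
proof -
  define U where "U = {x \<in> A. 0 < x}"
  define D where "D = {x \<in> A. x \<le> 0}"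
  have U: "card U \<le> 2"
    using assms(2) far_from_0 sep unfolding U_def
    by (intro card_separated_in_interval_le_2[of _ "pi / 3" pi "pi / 3"]) force+
  have D: "card D \<le> 2"
    using assms(2) far_from_0 sep unfolding D_def
    by (intro card_separated_in_interval_le_2[of _ "- pi" "- (pi / 3)" "pi / 3"]) force+
  have "card A = card U + card D"
    using \<open>finite A\<close> unfolding U_def D_def
    by (subst card_Un_disjoint[symmetric]) (auto intro: arg_cong[where f = card])
  show ?thesis
  proof (rule ccontr)
    assume "\<not> card A \<le> 3"
    then have "card U = 2" "card D = 2"
      using U D \<open>card A = card U + card D\<close> by linarith+
    then obtain u u' l l' where "U = {u, u'}" "u \<noteq> u'" "D = {l, l'}" "l \<noteq> l'"
      unfolding card_2_iff by blast
    then have "u \<in> A" "u' \<in> A" "l \<in> A" "l' \<in> A"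
      unfolding U_def D_def by auto
    then have "pi / 3 < \<bar>u - u'\<bar>" "pi / 3 < \<bar>l - l'\<bar>"
      using sep \<open>u \<noteq> u'\<close> \<open>l \<noteq> l'\<close> by blast+
    moreover have across: "pi \<le> x - y \<and> x - y < 5 * pi / 3" if "x \<in> U" "y \<in> D" for x y
    proof -
      have "x \<in> A" "y \<in> A" "0 < x" "y \<le> 0"
        using that unfolding U_def D_def by auto
      then show ?thesis
        using sep[of x y] gap[of x y] by auto
    qed
    moreover have "u \<in> U" "u' \<in> U" "l \<in> D" "l' \<in> D"
      using \<open>U = {u, u'}\<close> \<open>D = {l, l'}\<close> by auto
    \<comment> \<open>The four gaps between consecutive angles around the circle add up to 2 pi,
      but three of them exceed pi/3 and the one across the positive real axis is at least pi.\<close>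
    ultimately show False
      using across[of u l] across[of u l'] across[of u' l] across[of u' l'] by linarith
  qed
qed

lemma card_complex_configuration_le_3:
  fixes Z :: "complex set"
  assumes "finite Z"
    and one: "\<forall>z\<in>Z. 1 < cmod z \<and> cmod z < cmod (z - 1)"
    and two: "\<forall>z\<in>Z. \<forall>w\<in>Z. z \<noteq> w \<longrightarrow>
        max (cmod z) (cmod w) < cmod (z - w) \<and> max (cmod z) (cmod w) < cmod (z + w - 1)"
  shows "card Z \<le> 3"
proof -
  have arg: "pi / 3 < \<bar>Arg z\<bar>" if "z \<in> Z" for z
    using one that by (intro Arg_abs_gt_pi_third) auto
  have sep: "pi / 3 < \<bar>Arg z - Arg w\<bar> \<and> \<bar>Arg z - Arg w\<bar> < 5 * pi / 3"
    if "z \<in> Z" "w \<in> Z" "z \<noteq> w" for z w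
    using one two that by (intro Arg_diff_bounds) auto
  have "inj_on Arg Z"
    using sep by (intro inj_onI) fastforce
  moreover have "card (Arg ` Z) \<le> 3"
  proof (rule card_angle_configuration_le_3)
    show "finite (Arg ` Z)" "Arg ` Z \<subseteq> {-pi..pi}"
      using \<open>finite Z\<close> Arg_bounded by (auto simp: less_imp_le)
    show "pi / 3 < \<bar>x\<bar>" if "x \<in> Arg ` Z" for x
      using that arg by blast
    show "pi / 3 < \<bar>x - y\<bar> \<and> \<bar>x - y\<bar> < 5 * pi / 3" if "x \<in> Arg ` Z" "y \<in> Arg ` Z" "x \<noteq> y" for x y
      using that sep by blast
    show "pi \<le> x - y" if xy: "x \<in> Arg ` Z" "y \<in> Arg ` Z" "0 < x" "y \<le> 0" for x y
    proof -
      obtain z w where zw: "z \<in> Z" "w \<in> Z" "x = Arg z" "y = Arg w"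
        using xy(1,2) by blast
      then have "z \<noteq> w" "0 < Arg z" "Arg w \<le> 0"
        using xy(3,4) by auto
      then have "pi \<le> Arg z - Arg w"
        using one two zw(1,2) arg[OF zw(1)] arg[OF zw(2)] by (intro Arg_gap_ge_pi) auto
      with zw(3,4) show ?thesis
        by simp
    qed
  qed
  ultimately show ?thesis
    by (simp add: card_image)
qed

lemma ex_linear_isometry_complex:
  assumes "CARD('n) = 2"
  obtains f :: "real^'n \<Rightarrow> complex" where "linear f" "\<And>x. cmod (f x) = norm x"
proof -
  obtain i j :: 'n where ij: "UNIV = {i, j}" "i \<noteq> j"
    using assms card_2_iff[of "UNIV :: 'n set"] by blast
  define f where "f x = Complex (x $ i) (x $ j)" for x :: "real^'n"
  have "linear f"
    by (rule linearI) (simp_all add: f_def complex_eq_iff)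
  moreover have "cmod (f x) = norm x" for x
    unfolding f_def complex_norm norm_vec_def L2_set_def ij using ij(2) by simp
  ultimately show ?thesis
    using that by blast
qed

lemma ex_complex_similarity:
  fixes v :: "real^'n"
  assumes "CARD('n) = 2" "v \<noteq> 0"
  obtains h :: "real^'n \<Rightarrow> complex" where "linear h" "\<And>x. cmod (h x) = norm x / norm v" "h v = 1"
proof -
  obtain f :: "real^'n \<Rightarrow> complex" where f: "linear f" "\<And>x. cmod (f x) = norm x"
    using ex_linear_isometry_complex[OF assms(1)] by blast
  have "f v \<noteq> 0"
    using f(2)[of v] assms(2) by auto
  define h where "h = (\<lambda>x. f x / f v)"
  have "linear h"
    using linear_compose[OF f(1) bounded_linear.linear[OF bounded_linear_divide[of "f v"]]]
    by (simp add: h_def o_def)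
  moreover have "cmod (h x) = norm x / norm v" for x
    unfolding h_def by (simp add: norm_divide f(2))
  moreover have "h v = 1"
    unfolding h_def using \<open>f v \<noteq> 0\<close> by simp
  ultimately show ?thesis
    using that by blast
qed

lemma card_norm_separated_planar_le_4:
  fixes V :: "(real^'n) set"
  assumes "CARD('n) = 2" "finite V" "0 \<notin> V" "norm_separated V" "v \<in> V"
    and shortest: "\<And>x. x \<in> V - {v} \<Longrightarrow> norm v < norm x"
    and triple: "\<And>x y. x \<in> V - {v} \<Longrightarrow> y \<in> V - {v} \<Longrightarrow> x \<noteq> y \<Longrightarrow>
        max (norm x) (norm y) < norm (x + y - v)"
  shows "card V \<le> 4"
proof -
  have "0 < norm v"
    using assms(3,5) by auto
  then obtain h :: "real^'n \<Rightarrow> complex"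
    where h: "linear h" "\<And>x. cmod (h x) = norm x / norm v" "h v = 1"
    using ex_complex_similarity[OF assms(1)] by auto
  have h_diff: "h x - h y = h (x - y)" and h_triple: "h x + h y - 1 = h (x + y - v)" for x y
    using h(3) by (simp_all add: linear_diff[OF h(1)] linear_add[OF h(1)])
  have scaled: "max (cmod (h x)) (cmod (h y)) < cmod (h u)" if "max (norm x) (norm y) < norm u" for x y u
    using that \<open>0 < norm v\<close> unfolding h(2) by (auto simp: divide_strict_right_mono)
  have sep: "max (norm x) (norm y) < norm (x - y)" if "x \<in> V" "y \<in> V" "x \<noteq> y" for x y
    using assms(4) that unfolding norm_separated_def by blast
  have "inj_on h (V - {v})"
  proof (rule inj_onI, rule ccontr)
    fix x y assume "x \<in> V - {v}" "y \<in> V - {v}" "h x = h y" "x \<noteq> y"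
    then show False
      using scaled[OF sep[of x y]] h_diff[of x y] by simp
  qed
  moreover have "card (h ` (V - {v})) \<le> 3"
  proof (rule card_complex_configuration_le_3)
    show "finite (h ` (V - {v}))"
      using assms(2) by simp
    show "\<forall>z\<in>h ` (V - {v}). 1 < cmod z \<and> cmod z < cmod (z - 1)"
    proof
      fix z assume "z \<in> h ` (V - {v})"
      then obtain x where x: "x \<in> V - {v}" "z = h x"
        by blast
      then show "1 < cmod z \<and> cmod z < cmod (z - 1)"
        using shortest[OF x(1)] \<open>0 < norm v\<close> h(2,3) scaled[OF sep[of x v]] assms(5) h_diff[of x v]
        by simp
    qed
    show "\<forall>z\<in>h ` (V - {v}). \<forall>w\<in>h ` (V - {v}). z \<noteq> w \<longrightarrow>
        max (cmod z) (cmod w) < cmod (z - w) \<and> max (cmod z) (cmod w) < cmod (z + w - 1)"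
    proof (intro ballI impI)
      fix z w assume "z \<in> h ` (V - {v})" "w \<in> h ` (V - {v})" "z \<noteq> w"
      then obtain x y where xy: "x \<in> V - {v}" "y \<in> V - {v}" "x \<noteq> y" "z = h x" "w = h y"
        by blast
      then show "max (cmod z) (cmod w) < cmod (z - w) \<and> max (cmod z) (cmod w) < cmod (z + w - 1)"
        using scaled[OF sep[of x y]] scaled[OF triple[of x y]] h_diff[of x y] h_triple[of x y] by simp
    qed
  qed
  ultimately have "card (V - {v}) \<le> 3"
    by (simp add: card_image)
  then show ?thesis
    using assms(2,5) by (simp add: card_Diff_singleton)
qed

section \<open>Shortest vectors in the cosets of a discrete subgroup\<close>

lemma card_image_atLeastAtMost_le_changes:
  fixes f :: "int \<Rightarrow> 'b"
  shows "card (f ` {a..b}) \<le> card {t \<in> {a<..b}. f t \<noteq> f (t - 1)} + 1"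
proof (cases "a \<le> b")
  case True
  then show ?thesis
  proof (induction b rule: int_ge_induct)
    case base
    then show ?case by simp
  next
    case (step b)
    let ?C = "\<lambda>b. {t \<in> {a<..b}. f t \<noteq> f (t - 1)}"
    have "{a..b + 1} = insert (b + 1) {a..b}"
      using step.hyps by auto
    then have img: "f ` {a..b + 1} = insert (f (b + 1)) (f ` {a..b})"
      by simp
    have "{a<..b + 1} = insert (b + 1) {a<..b}"
      using step.hyps by auto
    then have C: "?C (b + 1) = (if f (b + 1) \<noteq> f b then insert (b + 1) (?C b) else ?C b)"
      by auto
    show ?case
    proof (cases "f (b + 1) = f b")
      case True
      then have "f ` {a..b + 1} = f ` {a..b}"
        using img step.hyps by auto
      with True C step.IH show ?thesis by simp
    next
      case False
      have "finite (?C b)"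
        by (rule finite_subset[of _ "{a<..b}"]) auto
      then have "card (?C (b + 1)) = card (?C b) + 1"
        using False C by simp
      moreover have "card (f ` {a..b + 1}) \<le> card (f ` {a..b}) + 1"
        unfolding img by (simp add: card_insert_le_m1 card_insert_if)
      ultimately show ?thesis
        using step.IH by simp
    qed
  qed
next
  case False
  then show ?thesis by simp
qed

locale discrete_subgroup =
  fixes L :: "'a::real_normed_vector set"
  assumes diff_mem: "x \<in> L \<Longrightarrow> y \<in> L \<Longrightarrow> x - y \<in> L"
    and nontrivial: "\<exists>x\<in>L. x \<noteq> 0"
    and finite_Int_bounded: "bounded S \<Longrightarrow> finite (L \<inter> S)"
begin

lemma zero_mem: "0 \<in> L"
  using nontrivial diff_mem by force

lemma uminus_mem: "x \<in> L \<Longrightarrow> - x \<in> L"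
  using diff_mem[OF zero_mem] by simp

lemma add_mem: "x \<in> L \<Longrightarrow> y \<in> L \<Longrightarrow> x + y \<in> L"
  using diff_mem[of x "- y"] uminus_mem by simp

definition coset :: "'a \<Rightarrow> int \<Rightarrow> 'a set" where
  "coset \<alpha> k = {v. v - of_int k *\<^sub>R \<alpha> \<in> L}"

lemma coset_diff:
  assumes "v \<in> coset \<alpha> j" "w \<in> coset \<alpha> k"
  shows "v - w \<in> coset \<alpha> (j - k)"
proof -
  have "v - w - of_int (j - k) *\<^sub>R \<alpha> = (v - of_int j *\<^sub>R \<alpha>) - (w - of_int k *\<^sub>R \<alpha>)"
    by (simp add: algebra_simps)
  with assms show ?thesis
    unfolding coset_def mem_Collect_eq by (metis diff_mem)
qed

lemma coset_add:
  assumes "v \<in> coset \<alpha> j" "w \<in> coset \<alpha> k"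
  shows "v + w \<in> coset \<alpha> (j + k)"
proof -
  have "v + w - of_int (j + k) *\<^sub>R \<alpha> = (v - of_int j *\<^sub>R \<alpha>) + (w - of_int k *\<^sub>R \<alpha>)"
    by (simp add: algebra_simps)
  with assms show ?thesis
    unfolding coset_def mem_Collect_eq by (metis add_mem)
qed

lemma coset_uminus:
  assumes "v \<in> coset \<alpha> k"
  shows "- v \<in> coset \<alpha> (- k)"
proof -
  have "- v - of_int (- k) *\<^sub>R \<alpha> = - (v - of_int k *\<^sub>R \<alpha>)"
    by (simp add: algebra_simps)
  with assms show ?thesis
    unfolding coset_def mem_Collect_eq by (metis uminus_mem)
qed

lemma finite_coset_cball: "finite (coset \<alpha> k \<inter> cball 0 r)"
proof -
  let ?w = "of_int k *\<^sub>R \<alpha>"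
  have "coset \<alpha> k \<inter> cball 0 r \<subseteq> (\<lambda>l. ?w + l) ` (L \<inter> cball (- ?w) r)"
  proof
    fix v assume "v \<in> coset \<alpha> k \<inter> cball 0 r"
    then have "v - ?w \<in> L \<inter> cball (- ?w) r"
      by (auto simp: coset_def dist_norm)
    then show "v \<in> (\<lambda>l. ?w + l) ` (L \<inter> cball (- ?w) r)"
      by (rule rev_image_eqI) simp
  qed
  moreover have "finite (L \<inter> cball (- ?w) r)"
    by (rule finite_Int_bounded) simp
  ultimately show ?thesis
    by (rule finite_subset[OF _ finite_imageI])
qed

lemma coset_nonzero: "\<exists>v \<in> coset \<alpha> k. v \<noteq> 0"
proof (cases "of_int k *\<^sub>R \<alpha> = (0::'a)")
  case True
  then show ?thesis using nontrivial by (auto simp: coset_def)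
next
  case False
  then show ?thesis using zero_mem by (intro bexI[of _ "of_int k *\<^sub>R \<alpha>"]) (auto simp: coset_def)
qed

definition min_norm :: "'a \<Rightarrow> int \<Rightarrow> real" where
  "min_norm \<alpha> k = Inf (norm ` (coset \<alpha> k - {0}))"

lemma min_norm_le: "v \<in> coset \<alpha> k \<Longrightarrow> v \<noteq> 0 \<Longrightarrow> min_norm \<alpha> k \<le> norm v"
  unfolding min_norm_def by (rule cInf_lower) (auto intro: bdd_belowI[of _ 0])

lemma min_norm_attained: "\<exists>v \<in> coset \<alpha> k - {0}. norm v = min_norm \<alpha> k"
proof -
  obtain v0 where v0: "v0 \<in> coset \<alpha> k - {0}"
    using coset_nonzero by blast
  define C where "C = (coset \<alpha> k - {0}) \<inter> cball 0 (norm v0)"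
  have C: "finite C" "v0 \<in> C"
    using finite_coset_cball v0 unfolding C_def by (auto intro: finite_subset)
  define m where "m = Min (norm ` C)"
  have "m \<in> norm ` C"
    unfolding m_def using C by (intro Min_in) auto
  then obtain v where v: "v \<in> coset \<alpha> k - {0}" "norm v = m"
    unfolding C_def by blast
  have "m \<le> norm w" if "w \<in> coset \<alpha> k - {0}" for w
  proof (cases "norm w \<le> norm v0")
    case True
    then show ?thesis
      unfolding m_def using C that by (intro Min_le) (auto simp: C_def)
  next
    case False
    have "m \<le> norm v0"
      unfolding m_def using C by (intro Min_le) auto
    with False show ?thesis by simp
  qed
  then have "min_norm \<alpha> k = m"
    unfolding min_norm_def using v by (intro cInf_eq_minimum) auto
  with v show ?thesis by auto
qed

lemma min_norm_pos: "0 < min_norm \<alpha> k"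
proof -
  obtain v where "v \<in> coset \<alpha> k - {0}" "norm v = min_norm \<alpha> k"
    using min_norm_attained by blast
  then show ?thesis by (metis Diff_iff insertI1 zero_less_norm_iff)
qed

lemma min_norm_uminus_le: "min_norm \<alpha> (- k) \<le> min_norm \<alpha> k"
proof -
  obtain v where "v \<in> coset \<alpha> k" "v \<noteq> 0" "norm v = min_norm \<alpha> k"
    using min_norm_attained by blast
  then show ?thesis
    using min_norm_le[OF coset_uminus, of v] by simp
qed

lemma min_norm_uminus: "min_norm \<alpha> (- k) = min_norm \<alpha> k"
  using min_norm_uminus_le[of \<alpha> k] min_norm_uminus_le[of \<alpha> "- k"] by simp

definition min_norm_upto :: "'a \<Rightarrow> int \<Rightarrow> real" where
  "min_norm_upto \<alpha> t = Min (min_norm \<alpha> ` {-t..t})"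

lemma min_norm_upto_le: "\<bar>k\<bar> \<le> t \<Longrightarrow> min_norm_upto \<alpha> t \<le> min_norm \<alpha> k"
  unfolding min_norm_upto_def by (rule Min_le) (auto simp: abs_le_iff)

lemma min_norm_upto_le_norm:
  "v \<in> coset \<alpha> k \<Longrightarrow> v \<noteq> 0 \<Longrightarrow> \<bar>k\<bar> \<le> t \<Longrightarrow> min_norm_upto \<alpha> t \<le> norm v"
  using min_norm_upto_le min_norm_le order_trans by blast

lemma min_norm_upto_attained: "0 \<le> t \<Longrightarrow> \<exists>k. \<bar>k\<bar> \<le> t \<and> min_norm_upto \<alpha> t = min_norm \<alpha> k"
proof -
  assume "0 \<le> t"
  then have "min_norm_upto \<alpha> t \<in> min_norm \<alpha> ` {-t..t}"
    unfolding min_norm_upto_def by (intro Min_in) auto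
  then show ?thesis by (auto simp: abs_le_iff)
qed

lemma min_norm_upto_max_attained:
  assumes "a \<le> 0" "0 \<le> b"
  shows "\<exists>j. a \<le> j \<and> j \<le> b \<and> min_norm_upto \<alpha> (max (- a) b) = min_norm \<alpha> j"
proof -
  have "0 \<le> max (- a) b"
    using assms(2) by linarith
  then obtain k where k: "\<bar>k\<bar> \<le> max (- a) b" "min_norm_upto \<alpha> (max (- a) b) = min_norm \<alpha> k"
    using min_norm_upto_attained by blast
  show ?thesis
  proof (cases "a \<le> k \<and> k \<le> b")
    case True
    with k(2) show ?thesis by blast
  next
    case False
    then have "a \<le> - k \<and> - k \<le> b"
      using k(1) assms by linarith
    with k(2) show ?thesis
      using min_norm_uminus by metis
  qed
qed

lemma min_norm_upto_antimono: "0 \<le> s \<Longrightarrow> s \<le> t \<Longrightarrow> min_norm_upto \<alpha> t \<le> min_norm_upto \<alpha> s"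
  unfolding min_norm_upto_def by (rule Min_antimono) auto

lemma min_norm_upto_step:
  assumes "1 \<le> t"
  shows "min_norm_upto \<alpha> t = min (min_norm_upto \<alpha> (t - 1)) (min_norm \<alpha> t)"
proof -
  have "{-t..t} = insert t (insert (- t) {-(t - 1)..t - 1})"
    using assms by auto
  then have "min_norm \<alpha> ` {-t..t} = insert (min_norm \<alpha> t) (min_norm \<alpha> ` {-(t - 1)..t - 1})"
    using min_norm_uminus by auto
  then show ?thesis
    using assms unfolding min_norm_upto_def by (simp add: min.commute)
qed

text \<open>The nearest neighbour distances of the first N Kronecker points are the values of
  min_norm_upto on [N div 2, N - 1] (see nn_dist_eq_min_norm_upto below); new values
  appear only at the following times.\<close>

definition drop_times :: "'a \<Rightarrow> nat \<Rightarrow> int set" where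
  "drop_times \<alpha> N =
     {t \<in> {int (N div 2)<..int N - 1}. min_norm_upto \<alpha> t < min_norm_upto \<alpha> (t - 1)}"

lemma card_min_norm_upto_image_le:
  "card (min_norm_upto \<alpha> ` {int (N div 2)..int N - 1}) \<le> card (drop_times \<alpha> N) + 1"
proof -
  have "min_norm_upto \<alpha> t \<noteq> min_norm_upto \<alpha> (t - 1) \<longleftrightarrow> min_norm_upto \<alpha> t < min_norm_upto \<alpha> (t - 1)"
    if "t \<in> {int (N div 2)<..int N - 1}" for t
    using that min_norm_upto_antimono[of "t - 1" t \<alpha>] by auto
  then have "drop_times \<alpha> N =
      {t \<in> {int (N div 2)<..int N - 1}. min_norm_upto \<alpha> t \<noteq> min_norm_upto \<alpha> (t - 1)}"
    unfolding drop_times_def by blast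
  then show ?thesis
    by (simp only: card_image_atLeastAtMost_le_changes)
qed

lemma finite_drop_times: "finite (drop_times \<alpha> N)"
  unfolding drop_times_def by (rule finite_subset[of _ "{int (N div 2)<..int N - 1}"]) auto

lemma drop_timesD:
  assumes "t \<in> drop_times \<alpha> N"
  shows "int (N div 2) < t" "t \<le> 2 * int (N div 2)"
    and "min_norm_upto \<alpha> t = min_norm \<alpha> t" "min_norm \<alpha> t < min_norm_upto \<alpha> (t - 1)"
proof -
  have t: "int (N div 2) < t" "t \<le> int N - 1" "min_norm_upto \<alpha> t < min_norm_upto \<alpha> (t - 1)"
    using assms unfolding drop_times_def by auto
  show "int (N div 2) < t"
    by (fact t(1))
  have "N \<le> 2 * (N div 2) + 1"
    by auto
  then show "t \<le> 2 * int (N div 2)"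
    using t(2) by linarith
  have "min_norm_upto \<alpha> t = min (min_norm_upto \<alpha> (t - 1)) (min_norm \<alpha> t)"
    using t(1) by (intro min_norm_upto_step) linarith
  with t(3) show "min_norm_upto \<alpha> t = min_norm \<alpha> t" "min_norm \<alpha> t < min_norm_upto \<alpha> (t - 1)"
    by (auto simp: min_def split: if_splits)
qed

lemma min_norm_drop_times_less:
  assumes "t \<in> drop_times \<alpha> N" "t' \<in> drop_times \<alpha> N" "t' < t"
  shows "min_norm \<alpha> t < min_norm \<alpha> t'"
proof -
  have "min_norm_upto \<alpha> (t - 1) \<le> min_norm_upto \<alpha> t'"
    using drop_timesD(1)[OF assms(2)] assms(3) by (intro min_norm_upto_antimono) auto
  then show ?thesis
    using drop_timesD(3,4)[OF assms(1)] drop_timesD(3)[OF assms(2)] by linarith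
qed

lemma min_norm_drop_times_less_upto_half:
  assumes "t \<in> drop_times \<alpha> N"
  shows "min_norm \<alpha> t < min_norm_upto \<alpha> (int (N div 2))"
proof -
  have "min_norm_upto \<alpha> (t - 1) \<le> min_norm_upto \<alpha> (int (N div 2))"
    using drop_timesD(1)[OF assms] by (intro min_norm_upto_antimono) auto
  then show ?thesis
    using drop_timesD(4)[OF assms] by linarith
qed

definition shortest :: "'a \<Rightarrow> int \<Rightarrow> 'a" where
  "shortest \<alpha> k = (SOME v. v \<in> coset \<alpha> k - {0} \<and> norm v = min_norm \<alpha> k)"

lemma shortest: "shortest \<alpha> k \<in> coset \<alpha> k" "shortest \<alpha> k \<noteq> 0" "norm (shortest \<alpha> k) = min_norm \<alpha> k"
proof -
  have "\<exists>v. v \<in> coset \<alpha> k - {0} \<and> norm v = min_norm \<alpha> k"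
    using min_norm_attained by blast
  then have "shortest \<alpha> k \<in> coset \<alpha> k - {0} \<and> norm (shortest \<alpha> k) = min_norm \<alpha> k"
    unfolding shortest_def by (rule someI_ex)
  then show "shortest \<alpha> k \<in> coset \<alpha> k" "shortest \<alpha> k \<noteq> 0" "norm (shortest \<alpha> k) = min_norm \<alpha> k"
    by auto
qed

lemma inj_on_shortest_drop_times: "inj_on (shortest \<alpha>) (drop_times \<alpha> N)"
proof (rule inj_onI, rule ccontr)
  fix t t' assume tt: "t \<in> drop_times \<alpha> N" "t' \<in> drop_times \<alpha> N" "shortest \<alpha> t = shortest \<alpha> t'" "t \<noteq> t'"
  then have "min_norm \<alpha> t = min_norm \<alpha> t'"
    by (metis shortest(3))
  with tt(4) show False
    using min_norm_drop_times_less[OF tt(1,2)] min_norm_drop_times_less[OF tt(2,1)] by linarith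
qed

lemma norm_shortest_diff_drop_times:
  assumes "t \<in> drop_times \<alpha> N" "t' \<in> drop_times \<alpha> N" "t' < t"
  shows "max (norm (shortest \<alpha> t)) (norm (shortest \<alpha> t')) < norm (shortest \<alpha> t - shortest \<alpha> t')"
proof -
  have less: "norm (shortest \<alpha> t) < norm (shortest \<alpha> t')"
    using min_norm_drop_times_less[OF assms] by (simp add: shortest(3))
  have "shortest \<alpha> t - shortest \<alpha> t' \<in> coset \<alpha> (t - t')"
    by (intro coset_diff shortest(1))
  moreover have "shortest \<alpha> t - shortest \<alpha> t' \<noteq> 0"
    using less by auto
  moreover have "\<bar>t - t'\<bar> \<le> int (N div 2)"
    using drop_timesD(1,2)[OF assms(1)] drop_timesD(1,2)[OF assms(2)] assms(3) by linarith
  ultimately have "min_norm_upto \<alpha> (int (N div 2)) \<le> norm (shortest \<alpha> t - shortest \<alpha> t')"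
    by (rule min_norm_upto_le_norm)
  moreover have "norm (shortest \<alpha> t') < min_norm_upto \<alpha> (int (N div 2))"
    using min_norm_drop_times_less_upto_half[OF assms(2)] by (simp add: shortest(3))
  ultimately show ?thesis
    using less by simp
qed

lemma norm_separated_shortest_drop_times: "norm_separated (shortest \<alpha> ` drop_times \<alpha> N)"
  unfolding norm_separated_def
proof (intro ballI impI)
  fix x y assume "x \<in> shortest \<alpha> ` drop_times \<alpha> N" "y \<in> shortest \<alpha> ` drop_times \<alpha> N" "x \<noteq> y"
  then obtain t t' where t: "t \<in> drop_times \<alpha> N" "t' \<in> drop_times \<alpha> N" "x = shortest \<alpha> t" "y = shortest \<alpha> t'" "t \<noteq> t'"
    by blast
  then consider "t' < t" | "t < t'"
    by linarith
  then show "max (norm x) (norm y) < norm (x - y)"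
  proof cases
    case 1
    then show ?thesis
      using norm_shortest_diff_drop_times[OF t(1,2)] t(3,4) by simp
  next
    case 2
    then show ?thesis
      using norm_shortest_diff_drop_times[OF t(2,1)] t(3,4) by (simp add: max.commute norm_minus_commute)
  qed
qed

lemma norm_shortest_triple_drop_times:
  assumes "a \<in> drop_times \<alpha> N" "b \<in> drop_times \<alpha> N" "c \<in> drop_times \<alpha> N" "a < b" "b < c"
  shows "max (norm (shortest \<alpha> a)) (norm (shortest \<alpha> b))
    < norm (shortest \<alpha> a + shortest \<alpha> b - shortest \<alpha> c)"
proof -
  have ab: "norm (shortest \<alpha> b) < norm (shortest \<alpha> a)"
    using min_norm_drop_times_less[OF assms(2,1,4)] by (simp add: shortest(3))
  have bounds: "int (N div 2) < a" "c \<le> 2 * int (N div 2)"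
    using drop_timesD(1)[OF assms(1)] drop_timesD(2)[OF assms(3)] by auto
  show ?thesis
  proof (cases "shortest \<alpha> a + shortest \<alpha> b - shortest \<alpha> c = 0")
    case False
    have "shortest \<alpha> a + shortest \<alpha> b - shortest \<alpha> c \<in> coset \<alpha> (a + b - c)"
      by (intro coset_diff coset_add shortest(1))
    moreover have "\<bar>a + b - c\<bar> \<le> a - 1"
      using bounds assms(4,5) by linarith
    ultimately have "min_norm_upto \<alpha> (a - 1) \<le> norm (shortest \<alpha> a + shortest \<alpha> b - shortest \<alpha> c)"
      using False by (intro min_norm_upto_le_norm)
    then show ?thesis
      using drop_timesD(4)[OF assms(1)] ab by (simp add: shortest(3))
  next
    case True
    \<comment> \<open>Then shortest b would be a nonzero vector of the coset of c - a, an index at most N div 2.\<close>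
    then have "shortest \<alpha> c - shortest \<alpha> a = shortest \<alpha> b"
      by (simp add: algebra_simps)
    moreover have "shortest \<alpha> c - shortest \<alpha> a \<in> coset \<alpha> (c - a)"
      by (intro coset_diff shortest(1))
    moreover have "\<bar>c - a\<bar> \<le> int (N div 2)"
      using bounds assms(4,5) by linarith
    ultimately have "min_norm_upto \<alpha> (int (N div 2)) \<le> norm (shortest \<alpha> b)"
      using shortest(2) by (metis min_norm_upto_le_norm)
    then show ?thesis
      using min_norm_drop_times_less_upto_half[OF assms(2)] by (simp add: shortest(3))
  qed
qed

end

section \<open>Kronecker points modulo a unimodular lattice\<close>

lemma finite_integer_vectors_cball:
  "finite {v :: real^'n. (\<forall>i. v $ i \<in> \<int>) \<and> norm v \<le> r}"
proof -
  let ?S = "{v :: real^'n. (\<forall>i. v $ i \<in> \<int>) \<and> norm v \<le> r}"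
  have "vec_nth ` ?S \<subseteq> PiE UNIV (\<lambda>_. {k \<in> \<int>. \<bar>k\<bar> \<le> r})"
    using component_le_norm_cart order_trans by fastforce
  moreover have "finite (PiE (UNIV :: 'n set) (\<lambda>_. {k \<in> \<int>. \<bar>k\<bar> \<le> r}))"
    by (rule finite_PiE) (auto intro: finite_abs_int_segment)
  ultimately have "finite (vec_nth ` ?S)"
    by (rule finite_subset)
  moreover have "inj_on vec_nth ?S"
    by (auto intro!: inj_onI simp: vec_eq_iff)
  ultimately show ?thesis
    using finite_imageD by blast
qed

lemma finite_integer_lattice_Int_bounded:
  fixes B :: "real^'n^'n"
  assumes "invertible B" "bounded S"
  shows "finite ((\<lambda>v. B *v v) ` {v. \<forall>i. v $ i \<in> \<int>} \<inter> S)"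
proof -
  obtain B' where "B' ** B = mat 1"
    using assms(1) unfolding invertible_def by blast
  then have inv: "B' *v (B *v v) = v" for v
    by (simp add: matrix_vector_mul_assoc)
  obtain r where r: "\<And>x. x \<in> S \<Longrightarrow> norm x \<le> r"
    using assms(2) unfolding bounded_iff by blast
  obtain K where K: "\<And>x. norm (B' *v x) \<le> norm x * K" and "K > 0"
    using bounded_linear.pos_bounded[OF matrix_vector_mul_bounded_linear] by blast
  have "(\<lambda>v. B *v v) ` {v. \<forall>i. v $ i \<in> \<int>} \<inter> S
      \<subseteq> (\<lambda>v. B *v v) ` {v. (\<forall>i. v $ i \<in> \<int>) \<and> norm v \<le> r * K}"
  proof
    fix x assume x: "x \<in> (\<lambda>v. B *v v) ` {v. \<forall>i. v $ i \<in> \<int>} \<inter> S"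
    then obtain v where v: "\<forall>i. v $ i \<in> \<int>" "x = B *v v"
      by blast
    have "norm v \<le> norm x * K"
      using K[of x] by (simp add: v(2) inv)
    also have "\<dots> \<le> r * K"
      using x r \<open>K > 0\<close> by (simp add: mult_right_mono)
    finally show "x \<in> (\<lambda>v. B *v v) ` {v. (\<forall>i. v $ i \<in> \<int>) \<and> norm v \<le> r * K}"
      using v by (intro image_eqI[of _ _ v]) auto
  qed
  then show ?thesis
    by (rule finite_subset) (intro finite_imageI finite_integer_vectors_cball)
qed

lemma unimodular_lattice_discrete_subgroup:
  fixes L :: "(real^'n) set"
  assumes "unimodular_lattice L"
  shows "discrete_subgroup L"
proof
  obtain B :: "real^'n^'n" where B: "invertible B" and L: "L = (\<lambda>v. B *v v) ` {v. \<forall>i. v $ i \<in> \<int>}"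
    using assms unfolding unimodular_lattice_def by blast
  show "x - y \<in> L" if xy: "x \<in> L" "y \<in> L" for x y
  proof -
    obtain u w where "x = B *v u" "y = B *v w" "\<forall>i. u $ i \<in> \<int>" "\<forall>i. w $ i \<in> \<int>"
      using xy unfolding L by blast
    then show ?thesis
      unfolding L by (intro image_eqI[of _ _ "u - w"]) (auto simp: matrix_vector_mult_diff_distrib)
  qed
  obtain i :: 'n where True by simp
  have "B *v axis i 1 \<in> L"
    unfolding L by (auto simp: axis_def)
  moreover have "B *v axis i 1 \<noteq> 0"
    using B invertible_left_inverse[of B] by (metis axis_eq_0_iff matrix_left_invertible_ker zero_neq_one)
  ultimately show "\<exists>x\<in>L. x \<noteq> 0" by blast
  show "finite (L \<inter> S)" if "bounded S" for S
    unfolding L using B \<open>bounded S\<close> by (rule finite_integer_lattice_Int_bounded)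
qed

lemma nn_dist_eq_min_norm_upto:
  fixes L :: "(real^'n) set"
  assumes "discrete_subgroup L" and n: "1 \<le> n" "n \<le> N"
  shows "nn_dist \<alpha> L N n = discrete_subgroup.min_norm_upto L \<alpha> (max (int n - 1) (int N - int n))"
proof -
  interpret discrete_subgroup L by fact
  define T where "T = max (int n - 1) (int N - int n)"
  define D where "D = {r. \<exists>m l. 1 \<le> m \<and> m \<le> N \<and> l \<in> L \<and>
                r = norm ((real m - real n) *\<^sub>R \<alpha> + l) \<and> r > 0}"
  have lower: "min_norm_upto \<alpha> T \<le> r" if "r \<in> D" for r
  proof -
    obtain m l where ml: "1 \<le> m" "m \<le> N" "l \<in> L" "r = norm ((real m - real n) *\<^sub>R \<alpha> + l)" "r > 0"
      using \<open>r \<in> D\<close> unfolding D_def by blast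
    have "(real m - real n) *\<^sub>R \<alpha> + l \<in> coset \<alpha> (int m - int n)"
      using ml(3) by (simp add: coset_def)
    moreover have "(real m - real n) *\<^sub>R \<alpha> + l \<noteq> 0"
      using ml(4,5) by auto
    moreover have "\<bar>int m - int n\<bar> \<le> T"
      using ml(1,2) unfolding T_def by linarith
    ultimately have "min_norm_upto \<alpha> T \<le> norm ((real m - real n) *\<^sub>R \<alpha> + l)"
      by (rule min_norm_upto_le_norm)
    with ml(4) show ?thesis by simp
  qed
  obtain j where j: "1 - int n \<le> j" "j \<le> int N - int n" "min_norm_upto \<alpha> T = min_norm \<alpha> j"
    using min_norm_upto_max_attained[of "1 - int n" "int N - int n" \<alpha>] n unfolding T_def by auto
  obtain v where v: "v \<in> coset \<alpha> j" "v \<noteq> 0" "norm v = min_norm \<alpha> j"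
    using min_norm_attained by blast
  define m where "m = nat (int n + j)"
  have m: "1 \<le> m" "m \<le> N" "real m - real n = of_int j"
    unfolding m_def using j n by auto
  have "v - of_int j *\<^sub>R \<alpha> \<in> L"
    using v(1) by (simp add: coset_def)
  moreover have "min_norm_upto \<alpha> T = norm ((real m - real n) *\<^sub>R \<alpha> + (v - of_int j *\<^sub>R \<alpha>))"
    using m(3) v(3) j(3) by simp
  ultimately have "min_norm_upto \<alpha> T \<in> D"
    unfolding D_def using m(1,2) min_norm_pos[of \<alpha> j] j(3)
    by (intro CollectI exI[of _ m] exI[of _ "v - of_int j *\<^sub>R \<alpha>"]) simp
  then have "Inf D = min_norm_upto \<alpha> T"
    using lower by (intro cInf_eq_minimum)
  then show ?thesis
    unfolding nn_dist_def D_def T_def .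
qed

lemma g_N_le_card_drop_times:
  fixes L :: "(real^'n) set"
  assumes "discrete_subgroup L"
  shows "g_N N \<alpha> L \<le> card (discrete_subgroup.drop_times L \<alpha> N) + 1"
proof -
  interpret discrete_subgroup L by fact
  have "nn_dist \<alpha> L N ` {1..N} \<subseteq> min_norm_upto \<alpha> ` {int (N div 2)..int N - 1}"
  proof
    fix r assume "r \<in> nn_dist \<alpha> L N ` {1..N}"
    then obtain n where n: "1 \<le> n" "n \<le> N" "r = nn_dist \<alpha> L N n"
      by auto
    moreover have "max (int n - 1) (int N - int n) \<in> {int (N div 2)..int N - 1}"
      using n(1,2) by auto
    ultimately show "r \<in> min_norm_upto \<alpha> ` {int (N div 2)..int N - 1}"
      using nn_dist_eq_min_norm_upto[OF assms] by auto
  qed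
  then have "g_N N \<alpha> L \<le> card (min_norm_upto \<alpha> ` {int (N div 2)..int N - 1})"
    unfolding g_N_def by (intro card_mono) auto
  also have "\<dots> \<le> card (drop_times \<alpha> N) + 1"
    by (rule card_min_norm_upto_image_le)
  finally show ?thesis .
qed

lemma card_drop_times_le_kissing_number:
  fixes L :: "(real^'n) set"
  assumes "discrete_subgroup L"
  shows "card (discrete_subgroup.drop_times L \<alpha> N) \<le> kissing_number TYPE('n)"
proof -
  interpret discrete_subgroup L by fact
  have "card (drop_times \<alpha> N) = card (shortest \<alpha> ` drop_times \<alpha> N)"
    using inj_on_shortest_drop_times by (simp add: card_image)
  also have "\<dots> \<le> kissing_number TYPE('n)"
    using finite_drop_times shortest(2) norm_separated_shortest_drop_times
    by (intro card_norm_separated_le_kissing_number) auto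
  finally show ?thesis .
qed

lemma card_drop_times_le_4:
  fixes L :: "(real^'n) set"
  assumes "discrete_subgroup L" "CARD('n) = 2"
  shows "card (discrete_subgroup.drop_times L \<alpha> N) \<le> 4"
proof -
  interpret discrete_subgroup L by fact
  show ?thesis
  proof (cases "drop_times \<alpha> N = {}")
    case False
    define c where "c = Max (drop_times \<alpha> N)"
    have c: "c \<in> drop_times \<alpha> N" "\<And>t. t \<in> drop_times \<alpha> N \<Longrightarrow> t \<le> c"
      unfolding c_def using finite_drop_times False by auto
    let ?V = "shortest \<alpha> ` drop_times \<alpha> N"
    have "card ?V \<le> 4"
    proof (rule card_norm_separated_planar_le_4[OF assms(2) _ _ _ imageI[OF c(1)]])
      show "finite ?V" "0 \<notin> ?V" "norm_separated ?V"
        using finite_drop_times shortest(2) norm_separated_shortest_drop_times by auto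
      show "norm (shortest \<alpha> c) < norm x" if "x \<in> ?V - {shortest \<alpha> c}" for x
        using that c min_norm_drop_times_less[OF c(1)] by (force simp: shortest(3) order_le_less)
      show "max (norm x) (norm y) < norm (x + y - shortest \<alpha> c)"
        if xy: "x \<in> ?V - {shortest \<alpha> c}" "y \<in> ?V - {shortest \<alpha> c}" "x \<noteq> y" for x y
      proof -
        obtain a b where ab: "a \<in> drop_times \<alpha> N" "b \<in> drop_times \<alpha> N" "a < c" "b < c"
          "x = shortest \<alpha> a" "y = shortest \<alpha> b" "a \<noteq> b"
          using xy c(2) by (auto simp: order_le_less)
        then consider "a < b" | "b < a"
          by linarith
        then show ?thesis
        proof cases
          case 1
          then show ?thesis
            using norm_shortest_triple_drop_times[OF ab(1,2) c(1) _ ab(4)] ab(5,6) by simp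
        next
          case 2
          then show ?thesis
            using norm_shortest_triple_drop_times[OF ab(2,1) c(1) _ ab(3)] ab(5,6)
            by (simp add: max.commute add.commute)
        qed
      qed
    qed
    then show ?thesis
      using inj_on_shortest_drop_times by (simp add: card_image)
  qed simp
qed

theorem theorem1p1:
  fixes L :: "(real ^ 'n) set" and \<alpha> :: "real ^ 'n" and N :: nat
  assumes "CARD('n) \<ge> 2"
    and "unimodular_lattice L"
  shows "g_N N \<alpha> L \<le> (if CARD('n) = 2 then 5 else kissing_number TYPE('n) + 1)"
proof -
  have L: "discrete_subgroup L"
    using assms(2) by (rule unimodular_lattice_discrete_subgroup)
  have "g_N N \<alpha> L \<le> card (discrete_subgroup.drop_times L \<alpha> N) + 1"
    using L by (rule g_N_le_card_drop_times)
  moreover have "card (discrete_subgroup.drop_times L \<alpha> N) \<le> 4" if "CARD('n) = 2"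
    using L that by (rule card_drop_times_le_4)
  moreover have "card (discrete_subgroup.drop_times L \<alpha> N) \<le> kissing_number TYPE('n)"
    using L by (rule card_drop_times_le_kissing_number)
  ultimately show ?thesis
    by auto
qed

end
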